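(* Let $d$ be a degree sequence and $M(d)$ its difference matrix. (i) If two entries in a single row, or in a single column, of $M(d)$ are both nonzero, then these two entries and all entries lying between them in that row (resp. column) are equal. (ii) There are no indices $i<i'$ and $j<j'$ such that the $2\times 2$ submatrix of $M(d)$ on rows $i,i'$ and columns $j,j'$ has the form $\begin{bmatrix} a & b\\ 0 & c\end{bmatrix}$ with $a\neq 0$ and $c\neq 0$ (here $b$ is arbitrary).
   Context: Degree sequences $d=(d_1,\dots,d_n)$ (of finite simple graphs) are listed in nonincreasing order. The corrected Ferrers diagram $F(d)$ is the $n\times n$ matrix whose diagonal entries are $0$ and in which, for each $i$, the first $d_i$ off-diagonal entries of row $i$ (reading left to right, skipping the diagonal position) are $1$ and all other entries are $0$. The difference matrix is $M(d)=F(d)^T-F(d)$; its diagonal entries are $0$. *)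

theory Defs
  imports Main
begin

text \<open>Vertices and matrix indices are 0-based: {0..<n}, where n = length d.\<close>

definition degree_sequence :: "nat list \<Rightarrow> bool" where
  "degree_sequence d \<longleftrightarrow>
     sorted (rev d) \<and>
     (\<exists>E :: nat \<Rightarrow> nat \<Rightarrow> bool.
        (\<forall>i j. E i j \<longrightarrow> E j i) \<and> (\<forall>i. \<not> E i i) \<and>
        (\<forall>i<length d. card {j. j < length d \<and> E i j} = d ! i))"

text \<open>Corrected Ferrers diagram: diagonal entries 0; in row i the first d_i off-diagonal
  entries are 1. Column j (0-based) of row i is the (j+1)-th off-diagonal entry if j < i
  and the j-th one if j > i.\<close>
definition ferrers :: "nat list \<Rightarrow> nat \<Rightarrow> nat \<Rightarrow> int" where
  "ferrers d i j = (if i \<noteq> j \<and> (if j < i then j + 1 else j) \<le> d ! i then 1 else 0)"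

definition diffmat :: "nat list \<Rightarrow> nat \<Rightarrow> nat \<Rightarrow> int" where
  "diffmat d i j = ferrers d j i - ferrers d i j"

end

theory Submission
  imports Defs
begin

text \<open>Since the diagonal is skipped, the ones of row \<open>i\<close> of \<open>F(d)\<close> sit exactly in the
  off-diagonal columns below \<open>e\<^sub>i = d\<^sub>i + [i < d\<^sub>i]\<close>, and \<open>e\<close> is nonincreasing along with
  \<open>d\<close>. Hence \<open>M(d)\<^sub>i\<^sub>k = 1\<close> iff \<open>i < e\<^sub>k\<close> and \<open>e\<^sub>i \<le> k\<close>, and \<open>M(d)\<^sub>i\<^sub>k = -1\<close> iff \<open>e\<^sub>k \<le> i\<close> and
  \<open>k < e\<^sub>i\<close>. Given the signs of the two nonzero entries, each claim becomes a short chain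
  of inequalities between values of the monotone \<open>e\<close>; in particular only the monotonicity
  of \<open>d\<close> is used, not that it is graphic.\<close>

definition ferrers_end :: "nat list \<Rightarrow> nat \<Rightarrow> nat" where
  "ferrers_end d i = (if i < d ! i then d ! i + 1 else d ! i)"

lemma ferrers_eq_below_end:
  "ferrers d i k = (if i \<noteq> k \<and> k < ferrers_end d i then 1 else 0)"
  unfolding ferrers_def ferrers_end_def by auto

lemma diffmat_eq_ferrers_end:
  "diffmat d i k =
     (if i < ferrers_end d k \<and> ferrers_end d i \<le> k then 1
      else if ferrers_end d k \<le> i \<and> k < ferrers_end d i then -1 else 0)"
  unfolding diffmat_def ferrers_eq_below_end by auto

lemma diffmat_antisym: "diffmat d i k = - diffmat d k i"
  unfolding diffmat_def by simp

lemma ferrers_end_antimono: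
  assumes "sorted (rev d)" "i \<le> i'" "i' < length d"
  shows "ferrers_end d i' \<le> ferrers_end d i"
proof -
  have "d ! i' \<le> d ! i" using sorted_rev_nth_mono[OF assms] .
  then show ?thesis unfolding ferrers_end_def using assms(2) by auto
qed

lemma diffmat_row_constant_between:
  assumes "sorted (rev d)" "j \<le> k" "k \<le> j'" "j' < length d"
    and "diffmat d i j \<noteq> 0" "diffmat d i j' \<noteq> 0"
  shows "diffmat d i k = diffmat d i j"
proof -
  have "ferrers_end d j' \<le> ferrers_end d k" "ferrers_end d k \<le> ferrers_end d j"
    using ferrers_end_antimono assms(1-4) by auto
  then show ?thesis
    using assms(2,3,5,6) unfolding diffmat_eq_ferrers_end by (auto split: if_splits)
qed

lemma diffmat_column_constant_between:
  assumes "sorted (rev d)" "i \<le> k" "k \<le> i'" "i' < length d"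
    and "diffmat d i j \<noteq> 0" "diffmat d i' j \<noteq> 0"
  shows "diffmat d k j = diffmat d i j"
  using diffmat_row_constant_between[OF assms(1-4), of j] assms(5,6)
  by (simp add: diffmat_antisym[of d _ j])

lemma diffmat_no_corner:
  assumes "sorted (rev d)" "i < i'" "i' < length d" "j < j'" "j' < length d"
    and "diffmat d i j \<noteq> 0" "diffmat d i' j' \<noteq> 0"
  shows "diffmat d i' j \<noteq> 0"
proof -
  have "ferrers_end d i' \<le> ferrers_end d i" "ferrers_end d j' \<le> ferrers_end d j"
    using ferrers_end_antimono assms(1-5) by auto
  then show ?thesis
    using assms(2,4,6,7) unfolding diffmat_eq_ferrers_end by (auto split: if_splits)
qed

theorem lemma8:
  fixes d :: "nat list"
  assumes "degree_sequence d"
  shows "(\<forall>i j j'. i < length d \<and> j < j' \<and> j' < length d \<and>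
            diffmat d i j \<noteq> 0 \<and> diffmat d i j' \<noteq> 0 \<longrightarrow>
            (\<forall>k. j \<le> k \<and> k \<le> j' \<longrightarrow> diffmat d i k = diffmat d i j))
       \<and> (\<forall>j i i'. j < length d \<and> i < i' \<and> i' < length d \<and>
            diffmat d i j \<noteq> 0 \<and> diffmat d i' j \<noteq> 0 \<longrightarrow>
            (\<forall>k. i \<le> k \<and> k \<le> i' \<longrightarrow> diffmat d k j = diffmat d i j))
       \<and> \<not> (\<exists>i i' j j'. i < i' \<and> i' < length d \<and> j < j' \<and> j' < length d \<and>
            diffmat d i j \<noteq> 0 \<and> diffmat d i' j = 0 \<and> diffmat d i' j' \<noteq> 0)"
proof -
  have sorted: "sorted (rev d)"
    using assms unfolding degree_sequence_def by blast
  show ?thesis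
  proof (intro conjI allI impI)
    fix i j j' k
    assume "i < length d \<and> j < j' \<and> j' < length d \<and>
      diffmat d i j \<noteq> 0 \<and> diffmat d i j' \<noteq> 0" "j \<le> k \<and> k \<le> j'"
    then show "diffmat d i k = diffmat d i j"
      using diffmat_row_constant_between[OF sorted] by blast
  next
    fix j i i' k
    assume "j < length d \<and> i < i' \<and> i' < length d \<and>
      diffmat d i j \<noteq> 0 \<and> diffmat d i' j \<noteq> 0" "i \<le> k \<and> k \<le> i'"
    then show "diffmat d k j = diffmat d i j"
      using diffmat_column_constant_between[OF sorted] by blast
  qed (use diffmat_no_corner[OF sorted] in blast)
qed

end
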